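(* Let $a>0$, let $q$ be a continuous complex-valued function on $[-a,a]$, and let $f,g\in C^{2}(-a,a)\cap C^{1}[-a,a]$ be two solutions of $y''-qy=0$ on $(-a,a)$ which do not vanish anywhere on $[-a,a]$ and are normalized by $f(0)=g(0)=1$. Put $h_f=f'(0)$ and $h_g=g'(0)$, and let $\{\varphi_k^f\}_{k\ge0}$ and $\{\varphi_k^g\}_{k\ge0}$ be the systems of recursive integrals built from $f$ and $g$ respectively (as described in the context, with initial point $x_0=0$). Then \[ \varphi_k^f=\varphi_k^g \quad\text{for every odd } k\in\mathbb{N}, \] and \[ \varphi_k^f=\varphi_k^g+\frac{h_f-h_g}{k+1}\,\varphi_{k+1}^g\quad\text{for every even } k\in\mathbb{N}_0=\{0,1,2,\dots\}. \]
   Context: For a function $F\in C^{2}(-a,a)\cap C^{1}[-a,a]$ not vanishing on $[-a,a]$, define recursively on $[-a,a]$ (with initial point $x_0=0$) \[ X^{(0)}\equiv1,\quad X^{(n)}(x)=n\int_{0}^{x}X^{(n-1)}(s)\,\big(F^{2}(s)\big)^{(-1)^{n}}\,ds,\qquad \widetilde X^{(0)}\equiv1,\quad \widetilde X^{(n)}(x)=n\int_{0}^{x}\widetilde X^{(n-1)}(s)\,\big(F^{2}(s)\big)^{(-1)^{n-1}}\,ds, \] for $n=1,2,\dots$, and set $\varphi_k^F=F\,X^{(k)}$ for $k$ odd and $\varphi_k^F=F\,\widetilde X^{(k)}$ for $k$ even (including $k=0$). *)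

theory Defs
  imports "HOL-Analysis.Analysis"
begin

definition oint :: "real \<Rightarrow> real \<Rightarrow> (real \<Rightarrow> complex) \<Rightarrow> complex" where
  "oint u v h = (if u \<le> v then integral {u..v} h else - integral {v..u} h)"

definition wpow :: "(real \<Rightarrow> complex) \<Rightarrow> nat \<Rightarrow> real \<Rightarrow> complex" where
  "wpow F n s = (if even n then (F s)^2 else inverse ((F s)^2))"

primrec Xf :: "(real \<Rightarrow> complex) \<Rightarrow> nat \<Rightarrow> real \<Rightarrow> complex" where
  "Xf F 0 x = 1"
| "Xf F (Suc n) x = of_nat (Suc n) * oint 0 x (\<lambda>s. Xf F n s * wpow F (Suc n) s)"

text \<open>tilde X uses the exponent (-1)^(n-1), i.e. wpow with index n+1 (same parity as n-1).\<close>
primrec Xt :: "(real \<Rightarrow> complex) \<Rightarrow> nat \<Rightarrow> real \<Rightarrow> complex" where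
  "Xt F 0 x = 1"
| "Xt F (Suc n) x = of_nat (Suc n) * oint 0 x (\<lambda>s. Xt F n s * wpow F n s)"

definition phi :: "(real \<Rightarrow> complex) \<Rightarrow> nat \<Rightarrow> real \<Rightarrow> complex" where
  "phi F k x = (if odd k then F x * Xf F k x else F x * Xt F k x)"

definition is_solution :: "real \<Rightarrow> (real \<Rightarrow> complex) \<Rightarrow> (real \<Rightarrow> complex) \<Rightarrow> (real \<Rightarrow> complex)
    \<Rightarrow> (real \<Rightarrow> complex) \<Rightarrow> bool" where
  "is_solution a q y y1 y2 \<longleftrightarrow>
     (\<forall>x\<in>{-a..a}. (y has_vector_derivative y1 x) (at x within {-a..a})) \<and>
     continuous_on {-a..a} y1 \<and>
     (\<forall>x\<in>{-a<..<a}. (y1 has_vector_derivative y2 x) (at x)) \<and>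
     continuous_on {-a<..<a} y2 \<and>
     (\<forall>x\<in>{-a<..<a}. y2 x - q x * y x = 0)"

end

theory Submission
  imports Defs
begin

(*
  Two nonvanishing solutions with f(0) = g(0) = 1 are related by f = g V, where V = f/g has
  derivative W/g^2 and the Wronskian W = f'g - fg' is constant, equal to c = h_f - h_g; hence
  V = 1 + c X_g^(1).  Since f^2 = g^2 V^2, every system of recursive integrals A_n built with the
  weights of g is turned into one built with the weights of f by taking A_n/V or
  V A_n - c/(n+1) A_(n+1) according to parity, and such systems are determined by their zeroth
  term.  For A = X_g this gives X_f^(k) = X_g^(k)/V for odd k; for
  A_n = tilde X_g^(n) + c/(n+1) X_g^(n+1), whose zeroth term is V, it gives
  tilde X_f^(k) = A_k/V for even k.  Multiplying by f = g V yields both identities.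
*)

lemma has_vector_derivative_inverse:
  fixes h :: "real \<Rightarrow> 'a::real_normed_field"
  assumes "(h has_vector_derivative h') (at x within S)" "h x \<noteq> 0"
  shows "((\<lambda>x. inverse (h x)) has_vector_derivative - h' / (h x)\<^sup>2) (at x within S)"
proof -
  have "(inverse has_field_derivative - inverse ((h x)\<^sup>2)) (at (h x) within h ` S)"
    using assms(2) by (auto intro!: derivative_eq_intros simp: power2_eq_square)
  from field_vector_diff_chain_within[OF assms(1) this]
  show ?thesis by (simp add: o_def divide_inverse)
qed

lemma has_vector_derivative_quotient:
  fixes h k :: "real \<Rightarrow> 'a::real_normed_field"
  assumes "(h has_vector_derivative h') (at x within S)" "(k has_vector_derivative k') (at x within S)"
    and "k x \<noteq> 0"
  shows "((\<lambda>x. h x / k x) has_vector_derivative (h' * k x - h x * k') / (k x)\<^sup>2) (at x within S)"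
proof -
  have "((\<lambda>x. h x * inverse (k x)) has_vector_derivative h x * (- k' / (k x)\<^sup>2) + h' * inverse (k x))
      (at x within S)"
    by (intro has_vector_derivative_mult assms has_vector_derivative_inverse)
  with assms(3) show ?thesis
    by (simp add: divide_inverse[symmetric]) (simp add: field_simps power2_eq_square)
qed

lemma has_vector_derivative_unique_antiderivative:
  fixes F G :: "real \<Rightarrow> 'a::real_normed_vector"
  assumes "convex S"
    and "\<And>x. x \<in> S \<Longrightarrow> (F has_vector_derivative D x) (at x within S)"
    and "\<And>x. x \<in> S \<Longrightarrow> (G has_vector_derivative D x) (at x within S)"
    and "x0 \<in> S" "F x0 = G x0" "x \<in> S"
  shows "F x = G x"
proof -
  obtain k where "\<And>y. y \<in> S \<Longrightarrow> F y - G y = k"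
    using has_vector_derivative_zero_constant[of S "\<lambda>y. F y - G y"] assms(1)
      has_vector_derivative_diff[OF assms(2) assms(3)] by auto
  from this[of x] this[of x0] assms(4-6) show ?thesis by simp
qed

lemma oint_same [simp]: "oint u u h = 0"
  by (simp add: oint_def)

lemma oint_has_vector_derivative:
  fixes h :: "real \<Rightarrow> complex"
  assumes "continuous_on {-a..a} h" "x \<in> {-a..a}" "0 \<le> a"
  shows "((\<lambda>x. oint 0 x h) has_vector_derivative h x) (at x within {-a..a})"
proof -
  have int: "h integrable_on {-a..a}"
    using assms(1) by (rule integrable_continuous_real)
  have split: "oint 0 y h = integral {-a..y} h - integral {-a..0} h" if "y \<in> {-a..a}" for y
  proof (cases "0 \<le> y")
    case True
    have "integral {-a..0} h + integral {0..y} h = integral {-a..y} h"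
      using Henstock_Kurzweil_Integration.integral_combine[of "-a" 0 y h] integrable_on_subinterval[of h "{-a..a}" "-a" y, OF int] True that assms
      by auto
    then show ?thesis using True by (simp add: oint_def algebra_simps)
  next
    case False
    have "integral {-a..y} h + integral {y..0} h = integral {-a..0} h"
      using Henstock_Kurzweil_Integration.integral_combine[of "-a" y 0 h] integrable_on_subinterval[of h "{-a..a}" "-a" 0, OF int] False that assms
      by auto
    then show ?thesis using False by (simp add: oint_def algebra_simps)
  qed
  show ?thesis
    by (rule has_vector_derivative_transform[OF assms(2) split])
       (auto intro!: has_vector_derivative_diff[where g'=0, simplified]
             integral_has_vector_derivative assms)
qed

lemma wpow_continuous_on:
  assumes "continuous_on S F" "\<And>x. x \<in> S \<Longrightarrow> F x \<noteq> 0"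
  shows "continuous_on S (wpow F n)"
  unfolding wpow_def using assms by (cases "even n") (auto intro!: continuous_intros)

lemma wpow_Suc_Suc [simp]: "wpow F (Suc (Suc n)) = wpow F n"
  by (simp add: wpow_def fun_eq_iff)

text \<open>The recursion \<open>Y (n+1) x = (n+1) * oint 0 x (\<lambda>s. Y n s * w (n+1) s)\<close>, recorded through the
  derivative and the value at 0 of each \<open>Y (n+1)\<close>, with \<open>Y 0\<close> left free.\<close>

definition recursive_integrals ::
    "real set \<Rightarrow> (nat \<Rightarrow> real \<Rightarrow> complex) \<Rightarrow> (nat \<Rightarrow> real \<Rightarrow> complex) \<Rightarrow> bool" where
  "recursive_integrals S w Y \<longleftrightarrow>
     (\<forall>n. Y (Suc n) 0 = 0 \<and>
       (\<forall>x\<in>S. (Y (Suc n) has_vector_derivative of_nat (Suc n) * Y n x * w (Suc n) x) (at x within S)))"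

lemma recursive_integrals_unique:
  assumes "convex S" "0 \<in> S" "recursive_integrals S w Y" "recursive_integrals S w Z"
    and "\<And>x. x \<in> S \<Longrightarrow> Y 0 x = Z 0 x" "x \<in> S"
  shows "Y n x = Z n x"
  using assms(6)
proof (induction n arbitrary: x)
  case 0
  then show ?case by (rule assms(5))
next
  case (Suc n)
  show ?case
  proof (rule has_vector_derivative_unique_antiderivative[OF assms(1) _ _ assms(2) _ Suc.prems])
    show "(Y (Suc n) has_vector_derivative of_nat (Suc n) * Z n y * w (Suc n) y) (at y within S)"
      if "y \<in> S" for y
      using assms(3) that by (simp add: recursive_integrals_def flip: Suc.IH[OF that])
    show "(Z (Suc n) has_vector_derivative of_nat (Suc n) * Z n y * w (Suc n) y) (at y within S)"
      if "y \<in> S" for y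
      using assms(4) that by (simp add: recursive_integrals_def)
    show "Y (Suc n) 0 = Z (Suc n) 0"
      using assms(3,4) by (simp add: recursive_integrals_def)
  qed
qed

lemma Xf_Suc_has_vector_derivative:
  assumes "continuous_on {-a..a} F" "\<And>x. x \<in> {-a..a} \<Longrightarrow> F x \<noteq> 0" "0 \<le> a"
    and "continuous_on {-a..a} (Xf F n)" "x \<in> {-a..a}"
  shows "(Xf F (Suc n) has_vector_derivative of_nat (Suc n) * Xf F n x * wpow F (Suc n) x)
           (at x within {-a..a})"
  unfolding Xf.simps mult.assoc
  by (intro has_vector_derivative_mult_right oint_has_vector_derivative continuous_intros
      wpow_continuous_on assms)

lemma continuous_on_Xf:
  assumes "continuous_on {-a..a} F" "\<And>x. x \<in> {-a..a} \<Longrightarrow> F x \<noteq> 0" "0 \<le> a"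
  shows "continuous_on {-a..a} (Xf F n)"
proof (induction n)
  case (Suc n)
  show ?case
    by (rule continuous_on_vector_derivative, rule Xf_Suc_has_vector_derivative[OF assms Suc])
qed simp

lemma recursive_integrals_Xf:
  assumes "continuous_on {-a..a} F" "\<And>x. x \<in> {-a..a} \<Longrightarrow> F x \<noteq> 0" "0 \<le> a"
  shows "recursive_integrals {-a..a} (wpow F) (Xf F)"
  unfolding recursive_integrals_def
  using Xf_Suc_has_vector_derivative[OF assms continuous_on_Xf[OF assms]] by simp

lemma Xt_Suc_has_vector_derivative:
  assumes "continuous_on {-a..a} F" "\<And>x. x \<in> {-a..a} \<Longrightarrow> F x \<noteq> 0" "0 \<le> a"
    and "continuous_on {-a..a} (Xt F n)" "x \<in> {-a..a}"
  shows "(Xt F (Suc n) has_vector_derivative of_nat (Suc n) * Xt F n x * wpow F n x)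
           (at x within {-a..a})"
  unfolding Xt.simps mult.assoc
  by (intro has_vector_derivative_mult_right oint_has_vector_derivative continuous_intros
      wpow_continuous_on assms)

lemma continuous_on_Xt:
  assumes "continuous_on {-a..a} F" "\<And>x. x \<in> {-a..a} \<Longrightarrow> F x \<noteq> 0" "0 \<le> a"
  shows "continuous_on {-a..a} (Xt F n)"
proof (induction n)
  case (Suc n)
  show ?case
    by (rule continuous_on_vector_derivative, rule Xt_Suc_has_vector_derivative[OF assms Suc])
qed simp

lemma recursive_integrals_Xt:
  assumes "continuous_on {-a..a} F" "\<And>x. x \<in> {-a..a} \<Longrightarrow> F x \<noteq> 0" "0 \<le> a"
  shows "recursive_integrals {-a..a} (\<lambda>k. wpow F (Suc k)) (Xt F)"
  unfolding recursive_integrals_def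
  using Xt_Suc_has_vector_derivative[OF assms continuous_on_Xt[OF assms]] by simp

lemma recursive_integrals_Xt_plus_Xf:
  assumes "continuous_on {-a..a} G" "\<And>x. x \<in> {-a..a} \<Longrightarrow> G x \<noteq> 0" "0 \<le> a"
  shows "recursive_integrals {-a..a} (\<lambda>k. wpow G (Suc k))
           (\<lambda>n x. Xt G n x + c / of_nat (Suc n) * Xf G (Suc n) x)"
  unfolding recursive_integrals_def
proof (intro allI conjI ballI)
  fix n x assume x: "x \<in> {-a..a}"
  have "(Xt G (Suc n) has_vector_derivative of_nat (Suc n) * Xt G n x * wpow G n x) (at x within {-a..a})"
    using recursive_integrals_Xt[OF assms] x by (simp add: recursive_integrals_def del: of_nat_Suc)
  moreover have "(Xf G (Suc (Suc n)) has_vector_derivative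
      of_nat (Suc (Suc n)) * Xf G (Suc n) x * wpow G n x) (at x within {-a..a})"
    using recursive_integrals_Xf[OF assms] x unfolding recursive_integrals_def
    by (metis wpow_Suc_Suc)
  ultimately have "((\<lambda>x. Xt G (Suc n) x + c / of_nat (Suc (Suc n)) * Xf G (Suc (Suc n)) x)
      has_vector_derivative of_nat (Suc n) * Xt G n x * wpow G n x
      + c / of_nat (Suc (Suc n)) * (of_nat (Suc (Suc n)) * Xf G (Suc n) x * wpow G n x))
      (at x within {-a..a})"
    by (intro has_vector_derivative_add has_vector_derivative_mult_right)
  then show "((\<lambda>x. Xt G (Suc n) x + c / of_nat (Suc (Suc n)) * Xf G (Suc (Suc n)) x) has_vector_derivative
      of_nat (Suc n) * (Xt G n x + c / of_nat (Suc n) * Xf G (Suc n) x) * wpow G (Suc (Suc n)) x)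
      (at x within {-a..a})"
    by (rule has_vector_derivative_eq_rhs) (simp del: of_nat_Suc Xf.simps Xt.simps add: field_simps)
qed simp

locale factored_pair =
  fixes a :: real and c :: complex and F G V :: "real \<Rightarrow> complex"
  assumes a_nonneg: "0 \<le> a"
    and G_continuous: "continuous_on {-a..a} G"
    and G_nonzero: "\<And>x. x \<in> {-a..a} \<Longrightarrow> G x \<noteq> 0"
    and V_nonzero: "\<And>x. x \<in> {-a..a} \<Longrightarrow> V x \<noteq> 0"
    and F_eq: "\<And>x. x \<in> {-a..a} \<Longrightarrow> F x = G x * V x"
    and V_derivative: "\<And>x. x \<in> {-a..a} \<Longrightarrow>
          (V has_vector_derivative c / (G x)\<^sup>2) (at x within {-a..a})"
    and V_0: "V 0 = 1"
begin

definition transform :: "nat \<Rightarrow> (nat \<Rightarrow> real \<Rightarrow> complex) \<Rightarrow> nat \<Rightarrow> real \<Rightarrow> complex" where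
  "transform s A n x =
     (if odd (n + s) then A n x / V x else V x * A n x - c / of_nat (Suc n) * A (Suc n) x)"

lemma transform_has_vector_derivative:
  assumes A: "recursive_integrals {-a..a} (\<lambda>k. wpow G (k + s)) A" and x: "x \<in> {-a..a}"
  shows "(transform s A (Suc n) has_vector_derivative
           of_nat (Suc n) * transform s A n x * wpow F (Suc n + s) x) (at x within {-a..a})"
proof -
  have A': "(A (Suc m) has_vector_derivative of_nat (Suc m) * A m x * wpow G (Suc m + s) x)
      (at x within {-a..a})" for m
    using A x by (simp add: recursive_integrals_def del: of_nat_Suc)
  note V' = V_derivative[OF x] and nz = G_nonzero[OF x] V_nonzero[OF x] and F = F_eq[OF x]
  show ?thesis
  proof (cases "even (n + s)")
    case True
    then have T: "transform s A (Suc n) = (\<lambda>x. A (Suc n) x / V x)"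
        "transform s A n x = V x * A n x - c / of_nat (Suc n) * A (Suc n) x"
      by (simp_all add: transform_def fun_eq_iff)
    have w: "wpow G (Suc (n + s)) x = inverse ((G x)\<^sup>2)" "wpow F (Suc (n + s)) x = inverse ((F x)\<^sup>2)"
      using True by (simp_all add: wpow_def)
    show ?thesis
      unfolding T
      by (rule has_vector_derivative_eq_rhs[OF has_vector_derivative_quotient[OF A' V' nz(2)]])
         (use nz in \<open>simp del: of_nat_Suc add: w F field_simps power2_eq_square\<close>)
  next
    case False
    then have T: "transform s A (Suc n) =
          (\<lambda>x. V x * A (Suc n) x - c / of_nat (Suc (Suc n)) * A (Suc (Suc n)) x)"
        "transform s A n x = A n x / V x"
      by (simp_all add: transform_def fun_eq_iff)
    have w: "wpow G (Suc (n + s)) x = (G x)\<^sup>2" "wpow G (n + s) x = inverse ((G x)\<^sup>2)"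
        "wpow F (Suc (n + s)) x = (F x)\<^sup>2"
      using False by (simp_all add: wpow_def)
    show ?thesis
      unfolding T
      by (rule has_vector_derivative_eq_rhs[OF has_vector_derivative_diff[OF
            has_vector_derivative_mult[OF V' A'] has_vector_derivative_mult_right[OF A']]])
         (use nz in \<open>simp del: of_nat_Suc add: w F field_simps power2_eq_square\<close>)
  qed
qed

lemma recursive_integrals_transform:
  assumes "recursive_integrals {-a..a} (\<lambda>k. wpow G (k + s)) A"
  shows "recursive_integrals {-a..a} (\<lambda>k. wpow F (k + s)) (transform s A)"
  using assms transform_has_vector_derivative[OF assms] V_0
  by (simp add: recursive_integrals_def transform_def del: of_nat_Suc)

lemma F_nonzero: "x \<in> {-a..a} \<Longrightarrow> F x \<noteq> 0"
  using F_eq G_nonzero V_nonzero by simp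

lemma F_continuous: "continuous_on {-a..a} F"
proof -
  have "continuous_on {-a..a} V"
    using V_derivative by (rule continuous_on_vector_derivative)
  then have "continuous_on {-a..a} (\<lambda>x. G x * V x)"
    using G_continuous by (intro continuous_intros)
  then show ?thesis
    by (rule continuous_on_eq) (simp add: F_eq)
qed

lemma V_eq_Xf:
  assumes "x \<in> {-a..a}"
  shows "V x = 1 + c * Xf G 1 x"
proof -
  have deriv: "((\<lambda>x. 1 + c * Xf G 1 x) has_vector_derivative c / (G y)\<^sup>2) (at y within {-a..a})"
    if y: "y \<in> {-a..a}" for y
  proof -
    have "(Xf G 1 has_vector_derivative wpow G 1 y) (at y within {-a..a})"
      using recursive_integrals_Xf[OF G_continuous G_nonzero a_nonneg] y
      unfolding recursive_integrals_def by (metis One_nat_def Xf.simps(1) mult_1 of_nat_1)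
    then show ?thesis
      by (auto intro!: derivative_eq_intros simp del: Xf.simps simp add: wpow_def divide_inverse)
  qed
  have zero: "0 \<in> {-a..a}"
    using a_nonneg by simp
  show ?thesis
    using has_vector_derivative_unique_antiderivative[OF convex_real_interval(5) V_derivative deriv
        zero _ assms] V_0 by simp
qed

lemma Xf_eq_transform:
  assumes "x \<in> {-a..a}"
  shows "Xf F n x = transform 0 (Xf G) n x"
proof (rule recursive_integrals_unique[OF convex_real_interval(5) _ _ _ _ assms])
  show "0 \<in> {-a..a}"
    using a_nonneg by simp
  show "recursive_integrals {-a..a} (\<lambda>k. wpow F (k + 0)) (Xf F)"
    using recursive_integrals_Xf[OF F_continuous F_nonzero a_nonneg] by simp
  show "recursive_integrals {-a..a} (\<lambda>k. wpow F (k + 0)) (transform 0 (Xf G))"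
    using recursive_integrals_Xf[OF G_continuous G_nonzero a_nonneg]
    by (intro recursive_integrals_transform) simp
  show "Xf F 0 y = transform 0 (Xf G) 0 y" if "y \<in> {-a..a}" for y
    using V_eq_Xf[OF that] by (simp add: transform_def)
qed

lemma Xt_eq_transform:
  assumes "x \<in> {-a..a}"
  shows "Xt F n x = transform 1 (\<lambda>n x. Xt G n x + c / of_nat (Suc n) * Xf G (Suc n) x) n x"
proof (rule recursive_integrals_unique[OF convex_real_interval(5) _ _ _ _ assms])
  show "0 \<in> {-a..a}"
    using a_nonneg by simp
  show "recursive_integrals {-a..a} (\<lambda>k. wpow F (k + 1)) (Xt F)"
    using recursive_integrals_Xt[OF F_continuous F_nonzero a_nonneg] by simp
  show "recursive_integrals {-a..a} (\<lambda>k. wpow F (k + 1))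
      (transform 1 (\<lambda>n x. Xt G n x + c / of_nat (Suc n) * Xf G (Suc n) x))"
    using recursive_integrals_Xt_plus_Xf[OF G_continuous G_nonzero a_nonneg]
    by (intro recursive_integrals_transform) simp
  show "Xt F 0 y = transform 1 (\<lambda>n x. Xt G n x + c / of_nat (Suc n) * Xf G (Suc n) x) 0 y"
    if "y \<in> {-a..a}" for y
    using V_eq_Xf[OF that] V_nonzero[OF that] by (simp add: transform_def)
qed

lemma phi_odd_eq:
  assumes "odd k" "x \<in> {-a..a}"
  shows "phi F k x = phi G k x"
proof -
  have "Xf F k x = Xf G k x / V x"
    using Xf_eq_transform[OF assms(2)] assms(1) by (simp add: transform_def)
  then show ?thesis
    using assms F_eq[OF assms(2)] V_nonzero[OF assms(2)] by (simp add: phi_def)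
qed

lemma phi_even_eq:
  assumes "even k" "x \<in> {-a..a}"
  shows "phi F k x = phi G k x + c / (of_nat k + 1) * phi G (Suc k) x"
proof -
  have XtV: "Xt F k x * V x = Xt G k x + c / (of_nat k + 1) * Xf G (Suc k) x"
    using Xt_eq_transform[OF assms(2)] assms(1) V_nonzero[OF assms(2)]
    by (simp del: Xf.simps add: transform_def add.commute)
  have "phi F k x = G x * (Xt F k x * V x)"
    using assms F_eq[OF assms(2)] by (simp add: phi_def mult_ac)
  also have "\<dots> = phi G k x + c / (of_nat k + 1) * phi G (Suc k) x"
    unfolding XtV using assms(1) by (simp del: Xf.simps add: phi_def algebra_simps)
  finally show ?thesis .
qed

end

lemma wronskian_constant:
  assumes "is_solution a q f f1 f2" "is_solution a q g g1 g2" "x \<in> {-a..a}" "y \<in> {-a..a}"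
  shows "f1 x * g x - f x * g1 x = f1 y * g y - f y * g1 y"
proof -
  define W where "W x = f1 x * g x - f x * g1 x" for x
  note sf = assms(1)[unfolded is_solution_def] and sg = assms(2)[unfolded is_solution_def]
  have "continuous_on {-a..a} f" "continuous_on {-a..a} g"
    using sf sg by (auto intro: continuous_on_vector_derivative)
  then have "continuous_on {-a..a} W"
    unfolding W_def using sf sg by (intro continuous_intros) auto
  moreover have "(W has_derivative (\<lambda>h. 0)) (at t within {-a..a})" if t: "t \<in> {-a..a} - {-a, a}" for t
  proof -
    have t': "t \<in> {-a<..<a}" using t by auto
    have at_t: "(h has_vector_derivative h1 t) (at t)"
      if "\<forall>x\<in>{-a..a}. (h has_vector_derivative h1 x) (at x within {-a..a})" for h h1
    proof -
      have "(h has_vector_derivative h1 t) (at t within {-a<..<a})"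
        by (rule has_vector_derivative_within_subset[of _ _ _ "{-a..a}"]) (use that t' in auto)
      then show ?thesis
        using has_vector_derivative_within_open[OF t' open_greaterThanLessThan] by blast
    qed
    have "(f has_vector_derivative f1 t) (at t)" "(g has_vector_derivative g1 t) (at t)"
      using sf sg by (auto intro: at_t)
    then have "(W has_vector_derivative (f1 t * g1 t + f2 t * g t) - (f t * g2 t + f1 t * g1 t)) (at t)"
      unfolding W_def using sf sg t' by (intro has_vector_derivative_diff has_vector_derivative_mult) auto
    moreover have "(f1 t * g1 t + f2 t * g t) - (f t * g2 t + f1 t * g1 t) = 0"
      using sf sg t' by (simp add: algebra_simps)
    ultimately show ?thesis
      by (simp add: has_vector_derivative_def has_derivative_at_withinI)
  qed
  ultimately have "z \<in> {-a..a} \<Longrightarrow> W z = W (-a)" for z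
    by (intro has_derivative_zero_unique_strong_interval[of "{-a, a}"]) auto
  from this[OF assms(3)] this[OF assms(4)] show ?thesis by (simp add: W_def)
qed

theorem mainTheorem1:
  fixes a :: real and q f f1 f2 g g1 g2 :: "real \<Rightarrow> complex"
  assumes "a > 0"
    and "continuous_on {-a..a} q"
    and "is_solution a q f f1 f2"
    and "is_solution a q g g1 g2"
    and "\<forall>x\<in>{-a..a}. f x \<noteq> 0"
    and "\<forall>x\<in>{-a..a}. g x \<noteq> 0"
    and "f 0 = 1" and "g 0 = 1"
  shows "(\<forall>k. odd k \<longrightarrow> (\<forall>x\<in>{-a..a}. phi f k x = phi g k x)) \<and>
         (\<forall>k. even k \<longrightarrow> (\<forall>x\<in>{-a..a}.
             phi f k x = phi g k x + (f1 0 - g1 0) / (of_nat k + 1) * phi g (Suc k) x))"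
proof -
  have zero: "0 \<in> {-a..a}"
    using assms(1) by simp
  have "factored_pair a (f1 0 - g1 0) f g (\<lambda>x. f x / g x)"
  proof
    show "continuous_on {-a..a} g"
      using assms(4) unfolding is_solution_def by (meson continuous_on_vector_derivative)
    fix x assume x: "x \<in> {-a..a}"
    have "(f has_vector_derivative f1 x) (at x within {-a..a})"
        "(g has_vector_derivative g1 x) (at x within {-a..a})"
      using assms(3,4) x unfolding is_solution_def by auto
    from has_vector_derivative_quotient[OF this assms(6)[rule_format, OF x]]
    show "((\<lambda>x. f x / g x) has_vector_derivative (f1 0 - g1 0) / (g x)\<^sup>2) (at x within {-a..a})"
      using wronskian_constant[OF assms(3,4) x zero] assms(7,8) by simp
    show "g x \<noteq> 0" "f x / g x \<noteq> 0" "f x = g x * (f x / g x)"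
      using assms(5,6) x by auto
  qed (use assms(1,7,8) in auto)
  then interpret factored_pair a "f1 0 - g1 0" f g "\<lambda>x. f x / g x" .
  show ?thesis
    using phi_odd_eq phi_even_eq by blast
qed

end
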